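(* Let $r\ge 2$ and $m$ be integers with $0\le 2m\le r$, $n=2r-4m$, and let $f:S^2(S^r(\mathbb{C}^2))\to S^{n}(\mathbb{C}^2)$ be an $\mathfrak{sl}_2(\mathbb{C})$-equivariant linear map, written $f=\sum_{k=0}^n q_k w_k$. Let $\lambda=q_0(x_0x_{2m})$. Then for every $0\le k\le n/2$, every $0\le i\le r$, and $j=2m+k-i$, $$\binom{n}{k}q_k(x_ix_j)=\lambda\sum_{s=\max(0,i-k)}^{\min(2m,i)}(-1)^s\binom{2m}{s}\binom{r-s}{r-i}\binom{r-2m+s}{r-j},$$ where binomial coefficients $\binom{a}{b}$ that do not make sense (e.g. $b<0$, $a<0$ or $b>a$) are taken to be $0$, and $x_l=0$ for $l\notin[0,r]$.
   Context: $\mathfrak{sl}_2(\mathbb{C})$ has basis $X=\begin{pmatrix}0&1\\0&0\end{pmatrix}$, $H=\begin{pmatrix}1&0\\0&-1\end{pmatrix}$, $Y=\begin{pmatrix}0&0\\1&0\end{pmatrix}$, acting on the irreducible modules $S^d(\mathbb{C}^2)$. Let $x_0\in S^r(\mathbb{C}^2)$ be a highest weight vector and $x_i=Y^ix_0/i!$ ($0\le i\le r$), so $Yx_i=(i+1)x_{i+1}$, $Xx_i=(r-i+1)x_{i-1}$, $Hx_i=(r-2i)x_i$. Let $w_0\in S^n(\mathbb{C}^2)$ be a highest weight vector and $w_k=Y^kw_0/k!$ ($0\le k\le n$). Writing $f=\sum_{k=0}^n q_kw_k$ means $f(u)=\sum_k q_k(u)w_k$ for linear forms $q_k$ on $S^2(S^r(\mathbb{C}^2))$;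 $q_k(x_ix_j)$ is the value on the product $x_ix_j$. *)

theory Defs
  imports Complex_Main
begin

datatype sl2gen = GX | GH | GY

definition binz :: "int \<Rightarrow> int \<Rightarrow> complex" where
  "binz a b = (if 0 \<le> b \<and> b \<le> a then of_nat (nat a choose nat b) else 0)"

text \<open>S^2(S^r(C^2)): an element is written uniquely as sum over ALL ordered pairs (a,b)
  of c a b * x_a x_b with c symmetric and supported on [0,r]^2.\<close>
definition S2 :: "int \<Rightarrow> (int \<Rightarrow> int \<Rightarrow> complex) set" where
  "S2 r = {c. (\<forall>a b. c a b = c b a) \<and>
              (\<forall>a b. \<not> (0 \<le> a \<and> a \<le> r \<and> 0 \<le> b \<and> b \<le> r) \<longrightarrow> c a b = 0)}"

text \<open>Action induced by X x_i = (r-i+1) x_(i-1), H x_i = (r-2i) x_i, Y x_i = (i+1) x_(i+1),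
  acting on products by the Leibniz rule (x_l = 0 for l outside [0,r]).\<close>
definition S2_act :: "int \<Rightarrow> sl2gen \<Rightarrow> (int \<Rightarrow> int \<Rightarrow> complex) \<Rightarrow> (int \<Rightarrow> int \<Rightarrow> complex)" where
  "S2_act r Z c = (\<lambda>a b. if 0 \<le> a \<and> a \<le> r \<and> 0 \<le> b \<and> b \<le> r then
     (case Z of
        GX \<Rightarrow> of_int (r - a) * c (a + 1) b + of_int (r - b) * c a (b + 1)
      | GH \<Rightarrow> of_int (2 * r - 2 * a - 2 * b) * c a b
      | GY \<Rightarrow> of_int a * c (a - 1) b + of_int b * c a (b - 1))
     else 0)"

definition Sn :: "int \<Rightarrow> (int \<Rightarrow> complex) set" where
  "Sn n = {v. \<forall>k. \<not> (0 \<le> k \<and> k \<le> n) \<longrightarrow> v k = 0}"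

text \<open>X w_k = (n-k+1) w_(k-1), H w_k = (n-2k) w_k, Y w_k = (k+1) w_(k+1).\<close>
definition Sn_act :: "int \<Rightarrow> sl2gen \<Rightarrow> (int \<Rightarrow> complex) \<Rightarrow> (int \<Rightarrow> complex)" where
  "Sn_act n Z v = (\<lambda>k. if 0 \<le> k \<and> k \<le> n then
     (case Z of
        GX \<Rightarrow> of_int (n - k) * v (k + 1)
      | GH \<Rightarrow> of_int (n - 2 * k) * v k
      | GY \<Rightarrow> of_int k * v (k - 1))
     else 0)"

definition mono :: "int \<Rightarrow> int \<Rightarrow> int \<Rightarrow> (int \<Rightarrow> int \<Rightarrow> complex)" where
  "mono r i j = (\<lambda>a b. if 0 \<le> i \<and> i \<le> r \<and> 0 \<le> j \<and> j \<le> r then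
      (if a = i \<and> b = j then 1/2 else 0) + (if a = j \<and> b = i then 1/2 else 0) else 0)"

definition sl2_equivariant_linear ::
  "int \<Rightarrow> int \<Rightarrow> ((int \<Rightarrow> int \<Rightarrow> complex) \<Rightarrow> (int \<Rightarrow> complex)) \<Rightarrow> bool" where
  "sl2_equivariant_linear r n f \<longleftrightarrow>
     (\<forall>c\<in>S2 r. f c \<in> Sn n) \<and>
     (\<forall>c\<in>S2 r. \<forall>d\<in>S2 r. f (\<lambda>a b. c a b + d a b) = (\<lambda>k. f c k + f d k)) \<and>
     (\<forall>t. \<forall>c\<in>S2 r. f (\<lambda>a b. t * c a b) = (\<lambda>k. t * f c k)) \<and>
     (\<forall>Z. \<forall>c\<in>S2 r. f (S2_act r Z c) = Sn_act n Z (f c))"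

text \<open>Writing f = sum_k q_k w_k, this is q_k(x_i x_j).\<close>
definition qk :: "int \<Rightarrow> ((int \<Rightarrow> int \<Rightarrow> complex) \<Rightarrow> (int \<Rightarrow> complex)) \<Rightarrow> int \<Rightarrow> int \<Rightarrow> int \<Rightarrow> complex" where
  "qk r f k i j = f (mono r i j) k"

end

theory Submission
  imports Defs
begin

text \<open>
  Equivariance under \<open>X\<close> turns the coefficients \<open>q\<^sub>k(x\<^sub>ix\<^sub>j)\<close> into a recursion in \<open>k\<close>:
  \<open>(r-i+1) q\<^sub>k(x\<^sub>i\<^sub>-\<^sub>1x\<^sub>j) + (r-j+1) q\<^sub>k(x\<^sub>ix\<^sub>j\<^sub>-\<^sub>1) = (n-k) q\<^sub>k\<^sub>+\<^sub>1(x\<^sub>ix\<^sub>j)\<close>, and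
  since \<open>w\<^sub>0\<close> never occurs in the image of \<open>Y\<close>, equivariance under \<open>Y\<close> forces
  \<open>q\<^sub>0(x\<^sub>ix\<^sub>2\<^sub>m\<^sub>-\<^sub>i) = (-1)\<^sup>i C(2m,i) \<lambda>\<close>. The alternating binomial sum of the theorem satisfies the
  same recursion (after multiplying \<open>q\<^sub>k\<close> by \<open>C(n,k)\<close>) and has the same initial values, so the
  two agree by induction on \<open>k\<close>.
\<close>

lemma mult_of_int_succ_cancel:
  fixes x y :: "'a :: field_char_0"
  assumes "of_int (k + 1) * x = of_int (k + 1) * y" "0 \<le> k"
  shows "x = y"
proof -
  have "of_int (k + 1) \<noteq> (0 :: 'a)"
    using \<open>0 \<le> k\<close> by (simp only: of_int_eq_0_iff)
  with assms(1) show ?thesis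
    by simp
qed

lemma binz_succ:
  assumes "0 \<le> a"
  shows "of_int (b + 1) * binz a (b + 1) = of_int (a - b) * binz a b"
proof (cases "0 \<le> b \<and> b < a")
  case True
  have "Suc (nat b) * (nat a choose Suc (nat b)) = (nat a - nat b) * (nat a choose nat b)"
    by (simp only: binomial_absorption binomial_absorb_comp)
  then have "of_nat (Suc (nat b) * (nat a choose Suc (nat b)))
      = (of_nat ((nat a - nat b) * (nat a choose nat b)) :: complex)"
    by (simp only:)
  with True show ?thesis
    by (simp add: binz_def nat_add_distrib algebra_simps flip: nat_diff_distrib)
next
  case False
  with assms consider "b < -1" | "b = -1" | "a \<le> b"
    by linarith
  then show ?thesis
    by cases (auto simp: binz_def)
qed

definition alt_binom_sum :: "int \<Rightarrow> int \<Rightarrow> int \<Rightarrow> int \<Rightarrow> complex" where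
  "alt_binom_sum d r i j =
     (\<Sum>s = 0 .. d. (-1) ^ nat s * binz d s * binz (r - s) (r - i) * binz (r - d + s) (r - j))"

lemma alt_binom_sum_X_rec:
  assumes "0 \<le> d" "d \<le> r"
  shows "of_int (r - i + 1) * alt_binom_sum d r (i - 1) j + of_int (r - j + 1) * alt_binom_sum d r i (j - 1)
       = of_int (i + j - d) * alt_binom_sum d r i j"
  unfolding alt_binom_sum_def sum_distrib_left sum.distrib [symmetric]
proof (rule sum.cong [OF refl])
  fix s assume s: "s \<in> {0..d}"
  define c where "c = (-1) ^ nat s * binz d s"
  define A where "A = binz (r - s) (r - i)"
  define B where "B = binz (r - d + s) (r - j)"
  have A_step: "of_int (r - i + 1) * binz (r - s) (r - (i - 1)) = of_int (i - s) * A"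
    using binz_succ [of "r - s" "r - i"] s assms unfolding A_def by (simp add: algebra_simps)
  have B_step: "of_int (r - j + 1) * binz (r - d + s) (r - (j - 1)) = of_int (j - d + s) * B"
    using binz_succ [of "r - d + s" "r - j"] s assms unfolding B_def by (simp add: algebra_simps)
  have "of_int (r - i + 1) * (c * binz (r - s) (r - (i - 1)) * B)
        + of_int (r - j + 1) * (c * A * binz (r - d + s) (r - (j - 1)))
      = c * B * (of_int (r - i + 1) * binz (r - s) (r - (i - 1)))
        + c * A * (of_int (r - j + 1) * binz (r - d + s) (r - (j - 1)))"
    by (simp add: algebra_simps)
  also have "\<dots> = c * B * (of_int (i - s) * A) + c * A * (of_int (j - d + s) * B)"
    by (simp only: A_step B_step)
  also have "\<dots> = of_int (i + j - d) * (c * A * B)"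
    by (simp add: algebra_simps)
  finally show "of_int (r - i + 1) * ((-1) ^ nat s * binz d s * binz (r - s) (r - (i - 1)) * binz (r - d + s) (r - j))
      + of_int (r - j + 1) * ((-1) ^ nat s * binz d s * binz (r - s) (r - i) * binz (r - d + s) (r - (j - 1)))
      = of_int (i + j - d) * ((-1) ^ nat s * binz d s * binz (r - s) (r - i) * binz (r - d + s) (r - j))"
    unfolding c_def A_def B_def .
qed

lemma alt_binom_sum_antidiagonal:
  assumes "0 \<le> d" "d \<le> r"
  shows "alt_binom_sum d r i (d - i) = (if 0 \<le> i then (-1) ^ nat i * binz d i else 0)"
proof -
  have "alt_binom_sum d r i (d - i) = (\<Sum>s = 0 .. d. if i = s then (-1) ^ nat s * binz d s else 0)"
    unfolding alt_binom_sum_def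
  proof (rule sum.cong [OF refl])
    fix s assume "s \<in> {0..d}"
    with assms show "(-1) ^ nat s * binz d s * binz (r - s) (r - i) * binz (r - d + s) (r - (d - i))
        = (if i = s then (-1) ^ nat s * binz d s else 0)"
      by (auto simp: binz_def algebra_simps)
  qed
  also have "\<dots> = (if 0 \<le> i then (-1) ^ nat i * binz d i else 0)"
    by (simp add: binz_def)
  finally show ?thesis .
qed

lemma alt_binom_sum_eq_truncated:
  "alt_binom_sum d r i (d + k - i) =
     (\<Sum>s = max 0 (i - k) .. min d i.
        (-1) ^ nat s * binz d s * binz (r - s) (r - i) * binz (r - d + s) (r - (d + k - i)))"
  unfolding alt_binom_sum_def
  by (rule sum.mono_neutral_right) (auto simp: binz_def)

definition half_mono :: "int \<Rightarrow> int \<Rightarrow> int \<Rightarrow> int \<Rightarrow> int \<Rightarrow> complex" where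
  "half_mono r i j a b = (if 0 \<le> i \<and> i \<le> r \<and> 0 \<le> j \<and> j \<le> r \<and> a = i \<and> b = j then 1/2 else 0)"

lemma mono_eq_half_mono: "mono r i j a b = half_mono r i j a b + half_mono r j i a b"
  unfolding mono_def half_mono_def by auto

lemma half_mono_Y:
  assumes "0 \<le> a" "a \<le> r" "0 \<le> b" "b \<le> r"
  shows "of_int a * half_mono r i j (a - 1) b + of_int b * half_mono r i j a (b - 1)
       = of_int (i + 1) * half_mono r (i + 1) j a b + of_int (j + 1) * half_mono r i (j + 1) a b"
  using assms unfolding half_mono_def
  by (cases "i = -1"; cases "j = -1") (auto simp: algebra_simps)

lemma half_mono_X:
  assumes "0 \<le> a" "a \<le> r" "0 \<le> b" "b \<le> r"
  shows "of_int (r - a) * half_mono r i j (a + 1) b + of_int (r - b) * half_mono r i j a (b + 1)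
       = of_int (r - i + 1) * half_mono r (i - 1) j a b + of_int (r - j + 1) * half_mono r i (j - 1) a b"
  using assms unfolding half_mono_def
  by (cases "i = r + 1"; cases "j = r + 1") (auto simp: algebra_simps)

lemma mono_eq_zero_outside:
  assumes "\<not> (0 \<le> a \<and> a \<le> r \<and> 0 \<le> b \<and> b \<le> r)"
  shows "mono r i j a b = 0"
proof (cases "0 \<le> i \<and> i \<le> r \<and> 0 \<le> j \<and> j \<le> r")
  case True
  with assms have "\<not> (a = i \<and> b = j)" "\<not> (a = j \<and> b = i)"
    by blast+
  then show ?thesis
    unfolding mono_def by (simp only: if_False add_0_right if_cancel)
next
  case False
  then show ?thesis
    unfolding mono_def by (simp only: if_False)
qed

lemma mono_in_S2: "mono r i j \<in> S2 r"
proof -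
  have "mono r i j a b = mono r i j b a" for a b
    unfolding mono_def
    by (cases "0 \<le> i \<and> i \<le> r \<and> 0 \<le> j \<and> j \<le> r")
      (simp_all only: if_True if_False, simp add: ac_simps)
  then show ?thesis
    unfolding S2_def using mono_eq_zero_outside by blast
qed

lemma mono_eq_zero:
  "\<not> (0 \<le> i \<and> i \<le> r \<and> 0 \<le> j \<and> j \<le> r) \<Longrightarrow> mono r i j = (\<lambda>a b. 0)"
  unfolding mono_def by (intro ext) (simp only: if_False)

lemma S2_scale_closed: "c \<in> S2 r \<Longrightarrow> (\<lambda>a b. t * c a b) \<in> S2 r"
  unfolding S2_def by auto

lemma S2_act_GY_mono:
  "S2_act r GY (mono r i j) =
     (\<lambda>a b. of_int (i + 1) * mono r (i + 1) j a b + of_int (j + 1) * mono r i (j + 1) a b)"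
proof (intro ext)
  fix a b
  show "S2_act r GY (mono r i j) a b =
      of_int (i + 1) * mono r (i + 1) j a b + of_int (j + 1) * mono r i (j + 1) a b"
  proof (cases "0 \<le> a \<and> a \<le> r \<and> 0 \<le> b \<and> b \<le> r")
    case True
    then show ?thesis
      using half_mono_Y [of a r b i j] half_mono_Y [of a r b j i]
      unfolding S2_act_def mono_eq_half_mono by (simp add: algebra_simps)
  next
    case False
    then show ?thesis
      unfolding S2_act_def
      by (simp only: if_False mono_eq_zero_outside [OF False] mult_zero_right add_0_right)
  qed
qed

lemma S2_act_GX_mono:
  "S2_act r GX (mono r i j) =
     (\<lambda>a b. of_int (r - i + 1) * mono r (i - 1) j a b + of_int (r - j + 1) * mono r i (j - 1) a b)"
proof (intro ext)
  fix a b
  show "S2_act r GX (mono r i j) a b =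
      of_int (r - i + 1) * mono r (i - 1) j a b + of_int (r - j + 1) * mono r i (j - 1) a b"
  proof (cases "0 \<le> a \<and> a \<le> r \<and> 0 \<le> b \<and> b \<le> r")
    case True
    then have bounds: "0 \<le> a" "a \<le> r" "0 \<le> b" "b \<le> r"
      by auto
    have "S2_act r GX (mono r i j) a b =
        (of_int (r - a) * half_mono r i j (a + 1) b + of_int (r - b) * half_mono r i j a (b + 1))
      + (of_int (r - a) * half_mono r j i (a + 1) b + of_int (r - b) * half_mono r j i a (b + 1))"
      unfolding S2_act_def mono_eq_half_mono using bounds by (simp add: algebra_simps)
    also have "\<dots> =
        (of_int (r - i + 1) * half_mono r (i - 1) j a b + of_int (r - j + 1) * half_mono r i (j - 1) a b)
      + (of_int (r - j + 1) * half_mono r (j - 1) i a b + of_int (r - i + 1) * half_mono r j (i - 1) a b)"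
      by (simp only: half_mono_X [OF bounds])
    finally show ?thesis
      unfolding mono_eq_half_mono by (simp add: algebra_simps)
  next
    case False
    then show ?thesis
      unfolding S2_act_def
      by (simp only: if_False mono_eq_zero_outside [OF False] mult_zero_right add_0_right)
  qed
qed

locale sl2_equivariant_map =
  fixes r n :: int and f :: "(int \<Rightarrow> int \<Rightarrow> complex) \<Rightarrow> (int \<Rightarrow> complex)"
  assumes equivariant_linear: "sl2_equivariant_linear r n f"
begin

lemma map_add: "c \<in> S2 r \<Longrightarrow> d \<in> S2 r \<Longrightarrow> f (\<lambda>a b. c a b + d a b) = (\<lambda>k. f c k + f d k)"
  using equivariant_linear unfolding sl2_equivariant_linear_def by blast

lemma map_scale: "c \<in> S2 r \<Longrightarrow> f (\<lambda>a b. t * c a b) = (\<lambda>k. t * f c k)"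
  using equivariant_linear unfolding sl2_equivariant_linear_def by blast

lemma map_act: "c \<in> S2 r \<Longrightarrow> f (S2_act r Z c) = Sn_act n Z (f c)"
  using equivariant_linear unfolding sl2_equivariant_linear_def by blast

lemma map_mono_lin_comb:
  "f (\<lambda>a b. s * mono r i j a b + t * mono r i' j' a b) k = s * qk r f k i j + t * qk r f k i' j'"
  by (simp add: map_add map_scale S2_scale_closed mono_in_S2 qk_def)

lemma qk_eq_zero:
  assumes "\<not> (0 \<le> i \<and> i \<le> r \<and> 0 \<le> j \<and> j \<le> r)"
  shows "qk r f k i j = 0"
proof -
  have "f (\<lambda>a b. 0) = (\<lambda>k. 0)"
    using map_scale [OF mono_in_S2, where t = 0] by simp
  with assms show ?thesis
    by (simp add: qk_def mono_eq_zero)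
qed

lemma qk_Y_rel: "of_int (i + 1) * qk r f 0 (i + 1) j + of_int (j + 1) * qk r f 0 i (j + 1) = 0"
proof -
  have "f (S2_act r GY (mono r i j)) 0 = Sn_act n GY (f (mono r i j)) 0"
    by (simp add: map_act mono_in_S2)
  also have "\<dots> = 0"
    by (simp add: Sn_act_def)
  finally show ?thesis
    unfolding S2_act_GY_mono map_mono_lin_comb .
qed

lemma qk_X_rel:
  assumes "0 \<le> k" "k \<le> n"
  shows "of_int (r - i + 1) * qk r f k (i - 1) j + of_int (r - j + 1) * qk r f k i (j - 1)
       = of_int (n - k) * qk r f (k + 1) i j"
proof -
  have "f (S2_act r GX (mono r i j)) k = Sn_act n GX (f (mono r i j)) k"
    by (simp add: map_act mono_in_S2)
  also have "\<dots> = of_int (n - k) * qk r f (k + 1) i j"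
    using assms by (simp add: Sn_act_def qk_def)
  finally show ?thesis
    unfolding S2_act_GX_mono map_mono_lin_comb .
qed

lemma qk_antidiagonal:
  assumes "0 \<le> d" "0 \<le> i"
  shows "qk r f 0 i (d - i) = (-1) ^ nat i * binz d i * qk r f 0 0 d"
  using \<open>0 \<le> i\<close>
proof (induction i rule: int_ge_induct)
  case base
  then show ?case
    using \<open>0 \<le> d\<close> by (simp add: binz_def)
next
  case (step i)
  have "of_int (i + 1) * qk r f 0 (i + 1) (d - (i + 1)) = - (of_int (d - i) * qk r f 0 i (d - i))"
    using qk_Y_rel [of i "d - (i + 1)"] by (simp add: eq_neg_iff_add_eq_0)
  also have "\<dots> = - ((-1) ^ nat i * qk r f 0 0 d * (of_int (d - i) * binz d i))"
    using step.IH by (simp add: algebra_simps)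
  also have "\<dots> = - ((-1) ^ nat i * qk r f 0 0 d * (of_int (i + 1) * binz d (i + 1)))"
    using binz_succ [OF \<open>0 \<le> d\<close>, of i] by simp
  also have "\<dots> = of_int (i + 1) * ((-1) ^ nat (i + 1) * binz d (i + 1) * qk r f 0 0 d)"
    using step.hyps by (simp add: nat_add_distrib algebra_simps)
  finally show ?case
    using step.hyps by (rule mult_of_int_succ_cancel)
qed

lemma binz_qk_eq_alt_binom_sum:
  assumes "0 \<le> d" "d \<le> r" "0 \<le> k" "k \<le> n" "i + j = d + k"
  shows "binz n k * qk r f k i j = qk r f 0 0 d * alt_binom_sum d r i j"
  using \<open>0 \<le> k\<close> \<open>k \<le> n\<close> \<open>i + j = d + k\<close>
proof (induction k arbitrary: i j rule: int_ge_induct)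
  case base
  then have "j = d - i" and "binz n 0 = 1"
    by (simp_all add: binz_def)
  with assms(1,2) show ?case
    by (cases "0 \<le> i") (simp_all add: qk_antidiagonal alt_binom_sum_antidiagonal qk_eq_zero)
next
  case (step k)
  let ?q = "qk r f" and ?lam = "qk r f 0 0 d" and ?S = "alt_binom_sum d r"
  have "of_int (k + 1) * binz n (k + 1) = of_int (n - k) * binz n k"
    using step by (intro binz_succ) simp
  then have "of_int (k + 1) * (binz n (k + 1) * ?q (k + 1) i j)
      = binz n k * (of_int (n - k) * ?q (k + 1) i j)"
    by (metis mult.assoc mult.commute)
  also have "\<dots> = binz n k * (of_int (r - i + 1) * ?q k (i - 1) j + of_int (r - j + 1) * ?q k i (j - 1))"
    using step by (simp only: qk_X_rel)
  also have "\<dots> = of_int (r - i + 1) * (binz n k * ?q k (i - 1) j)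
                 + of_int (r - j + 1) * (binz n k * ?q k i (j - 1))"
    by (simp add: algebra_simps)
  also have "\<dots> = of_int (r - i + 1) * (?lam * ?S (i - 1) j) + of_int (r - j + 1) * (?lam * ?S i (j - 1))"
    using step by simp
  also have "\<dots> = ?lam * (of_int (r - i + 1) * ?S (i - 1) j + of_int (r - j + 1) * ?S i (j - 1))"
    by (simp add: algebra_simps)
  also have "\<dots> = ?lam * (of_int (i + j - d) * ?S i j)"
    by (simp only: alt_binom_sum_X_rec [OF assms(1,2)])
  also have "\<dots> = of_int (k + 1) * (?lam * ?S i j)"
    using step by (simp add: algebra_simps)
  finally show ?case
    using step.hyps by (rule mult_of_int_succ_cancel)
qed

end

theorem mainTheorem3:
  fixes r m n :: int
    and f :: "(int \<Rightarrow> int \<Rightarrow> complex) \<Rightarrow> (int \<Rightarrow> complex)"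
  assumes "r \<ge> 2" and "0 \<le> 2 * m" and "2 * m \<le> r" and "n = 2 * r - 4 * m"
    and "sl2_equivariant_linear r n f"
  shows "\<forall>k i. 0 \<le> k \<and> 2 * k \<le> n \<and> 0 \<le> i \<and> i \<le> r \<longrightarrow>
     (let j = 2 * m + k - i; lam = qk r f 0 0 (2 * m) in
      binz n k * qk r f k i j =
      lam * (\<Sum>s = max 0 (i - k) .. min (2 * m) i.
              (-1) ^ nat s * binz (2 * m) s * binz (r - s) (r - i) * binz (r - 2 * m + s) (r - j)))"
proof -
  interpret sl2_equivariant_map r n f
    by unfold_locales (fact assms(5))
  have "binz n k * qk r f k i (2 * m + k - i)
      = qk r f 0 0 (2 * m) * alt_binom_sum (2 * m) r i (2 * m + k - i)"
    if "0 \<le> k" "2 * k \<le> n" for k i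
    using that assms(2,3) by (intro binz_qk_eq_alt_binom_sum) auto
  then show ?thesis
    unfolding Let_def alt_binom_sum_eq_truncated by blast
qed

end
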